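(* Let $k$ be an integer. If a graph $T$ is a maximum $\mathsf{TJ}_k$-graph, then for every integer $n \geq k$, $T$ is a maximum $\mathsf{TJ}_n$-graph.
   Context: Graphs are finite, simple, undirected. $\mathsf{TJ}_k(G)$ is the graph on the cliques of $G$ of size $k$ where $C, C'$ are adjacent iff $|C \setminus C'| = |C' \setminus C| = 1$. A graph $T$ is a $\mathsf{TJ}_k$-graph if $T \cong \mathsf{TJ}_k(G)$ for some graph $G$, and a maximum $\mathsf{TJ}_k$-graph if $T \cong \mathsf{TJ}_k(G)$ for some graph $G$ with $\omega(G) = k$, where $\omega(G)$ is the maximum clique size of $G$. *)

theory Defs
  imports Main
begin

definition graph :: "'a set \<Rightarrow> ('a \<Rightarrow> 'a \<Rightarrow> bool) \<Rightarrow> bool" where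
  "graph V E \<longleftrightarrow> finite V \<and> (\<forall>x y. E x y \<longrightarrow> x \<in> V \<and> y \<in> V)
     \<and> (\<forall>x y. E x y \<longrightarrow> E y x) \<and> (\<forall>x. \<not> E x x)"

definition clique :: "'a set \<Rightarrow> ('a \<Rightarrow> 'a \<Rightarrow> bool) \<Rightarrow> 'a set \<Rightarrow> bool" where
  "clique V E C \<longleftrightarrow> C \<subseteq> V \<and> (\<forall>x\<in>C. \<forall>y\<in>C. x \<noteq> y \<longrightarrow> E x y)"

definition cliques_of_size :: "'a set \<Rightarrow> ('a \<Rightarrow> 'a \<Rightarrow> bool) \<Rightarrow> nat \<Rightarrow> 'a set set" where
  "cliques_of_size V E k = {C. clique V E C \<and> finite C \<and> card C = k}"

definition clique_number :: "'a set \<Rightarrow> ('a \<Rightarrow> 'a \<Rightarrow> bool) \<Rightarrow> nat" where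
  "clique_number V E = Max (card ` {C. clique V E C})"

definition TJ_V :: "'a set \<Rightarrow> ('a \<Rightarrow> 'a \<Rightarrow> bool) \<Rightarrow> nat \<Rightarrow> 'a set set" where
  "TJ_V V E k = cliques_of_size V E k"

definition TJ_E :: "'a set \<Rightarrow> ('a \<Rightarrow> 'a \<Rightarrow> bool) \<Rightarrow> nat \<Rightarrow> 'a set \<Rightarrow> 'a set \<Rightarrow> bool" where
  "TJ_E V E k C C' \<longleftrightarrow> C \<in> cliques_of_size V E k \<and> C' \<in> cliques_of_size V E k
     \<and> card (C - C') = 1 \<and> card (C' - C) = 1"

definition graph_iso :: "'a set \<Rightarrow> ('a \<Rightarrow> 'a \<Rightarrow> bool) \<Rightarrow> 'b set \<Rightarrow> ('b \<Rightarrow> 'b \<Rightarrow> bool) \<Rightarrow> bool" where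
  "graph_iso V E V' E' \<longleftrightarrow> (\<exists>f. bij_betw f V V' \<and> (\<forall>x\<in>V. \<forall>y\<in>V. E x y \<longleftrightarrow> E' (f x) (f y)))"

text \<open>Every finite graph is isomorphic to one on natural-number vertices,
so quantifying over graphs on nat loses no generality.\<close>
definition max_TJ_graph :: "nat \<Rightarrow> 'a set \<Rightarrow> ('a \<Rightarrow> 'a \<Rightarrow> bool) \<Rightarrow> bool" where
  "max_TJ_graph k V E \<longleftrightarrow> (\<exists>(W :: nat set) F. graph W F \<and> clique_number W F = k
      \<and> graph_iso V E (TJ_V W F k) (TJ_E W F k))"

end

theory Submission
  imports Defs
begin

text \<open>Join G with a complete graph on n - k new vertices K. A clique of the join is a clique of G
together with some vertices of K, so its maximum cliques are exactly the sets C \<union> K with C a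
maximum clique of G. Since (C \<union> K) - (C' \<union> K) = C - C', the map C \<mapsto> C \<union> K is an isomorphism from
TJ_k(G) onto TJ_n of the join, whose clique number is n.\<close>

lemma graph_iso_trans:
  assumes "graph_iso V1 E1 V2 E2" and "graph_iso V2 E2 V3 E3"
  shows "graph_iso V1 E1 V3 E3"
proof -
  obtain f where f: "bij_betw f V1 V2" "\<forall>x\<in>V1. \<forall>y\<in>V1. E1 x y \<longleftrightarrow> E2 (f x) (f y)"
    using assms(1) by (auto simp: graph_iso_def)
  obtain g where g: "bij_betw g V2 V3" "\<forall>x\<in>V2. \<forall>y\<in>V2. E2 x y \<longleftrightarrow> E3 (g x) (g y)"
    using assms(2) by (auto simp: graph_iso_def)
  have "bij_betw (g \<circ> f) V1 V3"
    using f(1) g(1) by (rule bij_betw_trans)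
  moreover have "\<forall>x\<in>V1. \<forall>y\<in>V1. E1 x y \<longleftrightarrow> E3 ((g \<circ> f) x) ((g \<circ> f) y)"
    using f g bij_betwE[OF f(1)] by auto
  ultimately show ?thesis
    unfolding graph_iso_def by blast
qed

lemma finite_card_cliques:
  assumes "graph W F"
  shows "finite (card ` {C. clique W F C})"
proof -
  have "{C. clique W F C} \<subseteq> Pow W"
    by (auto simp: clique_def)
  then show ?thesis
    using assms by (meson graph_def finite_Pow_iff finite_imageI finite_subset)
qed

lemma card_clique_le_clique_number:
  assumes "graph W F" and "clique W F C"
  shows "card C \<le> clique_number W F"
  using Max_ge[OF finite_card_cliques[OF assms(1)]] assms(2)
  unfolding clique_number_def by blast

lemma ex_clique_card_clique_number:
  assumes "graph W F"
  obtains C where "clique W F C" and "card C = clique_number W F"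
proof -
  have "clique W F {}"
    by (simp add: clique_def)
  then have "card ` {C. clique W F C} \<noteq> {}"
    by blast
  from Max_in[OF finite_card_cliques[OF assms] this] that show thesis
    unfolding clique_number_def by (metis imageE mem_Collect_eq)
qed

definition join_complete :: "'a set \<Rightarrow> ('a \<Rightarrow> 'a \<Rightarrow> bool) \<Rightarrow> 'a set \<Rightarrow> 'a \<Rightarrow> 'a \<Rightarrow> bool" where
  "join_complete W F K x y \<longleftrightarrow>
     F x y \<or> (x \<noteq> y \<and> x \<in> W \<union> K \<and> y \<in> W \<union> K \<and> (x \<in> K \<or> y \<in> K))"

context
  fixes W K :: "'a set" and F :: "'a \<Rightarrow> 'a \<Rightarrow> bool"
  assumes graph: "graph W F" and disjoint: "W \<inter> K = {}" and finite_K: "finite K"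
begin

lemma graph_join_complete: "graph (W \<union> K) (join_complete W F K)"
  using graph finite_K unfolding graph_def join_complete_def by blast

lemma clique_join_complete_iff:
  "clique (W \<union> K) (join_complete W F K) D \<longleftrightarrow> D \<subseteq> W \<union> K \<and> clique W F (D \<inter> W)"
  using graph disjoint unfolding clique_def join_complete_def graph_def by blast

lemma clique_join_complete_Un:
  assumes "clique W F C"
  shows "clique (W \<union> K) (join_complete W F K) (C \<union> K)"
proof -
  have "C \<subseteq> W"
    using assms by (simp add: clique_def)
  with assms disjoint have "(C \<union> K) \<inter> W = C"
    by blast
  with \<open>C \<subseteq> W\<close> assms show ?thesis
    by (auto simp: clique_join_complete_iff)
qed

lemma card_clique_Un:
  assumes "clique W F C"
  shows "card (C \<union> K) = card C + card K"
proof -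
  have "C \<subseteq> W"
    using assms by (simp add: clique_def)
  then show ?thesis
    using graph disjoint finite_K
    by (intro card_Un_disjoint) (auto simp: graph_def intro: finite_subset)
qed

lemma card_clique_join_complete:
  assumes "clique (W \<union> K) (join_complete W F K) D"
  shows "card D = card (D \<inter> W) + card (D \<inter> K)"
proof -
  have "D = (D \<inter> W) \<union> (D \<inter> K)"
    using assms by (auto simp: clique_join_complete_iff)
  moreover have "finite W"
    using graph by (simp add: graph_def)
  ultimately show ?thesis
    using disjoint finite_K by (metis Int_Un_distrib card_Un_disjoint finite_Int inf_commute
        inf_left_commute inf_bot_right)
qed

lemma clique_number_join_complete:
  "clique_number (W \<union> K) (join_complete W F K) = clique_number W F + card K"
proof (rule antisym)
  obtain D where D: "clique (W \<union> K) (join_complete W F K) D"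
    and card_D: "card D = clique_number (W \<union> K) (join_complete W F K)"
    using ex_clique_card_clique_number[OF graph_join_complete] .
  have "card (D \<inter> W) \<le> clique_number W F"
    using D graph by (simp add: clique_join_complete_iff card_clique_le_clique_number)
  moreover have "card (D \<inter> K) \<le> card K"
    using finite_K by (simp add: card_mono)
  ultimately show "clique_number (W \<union> K) (join_complete W F K) \<le> clique_number W F + card K"
    using card_clique_join_complete[OF D] card_D by simp
next
  obtain C where "clique W F C" and "card C = clique_number W F"
    using ex_clique_card_clique_number[OF graph] .
  then show "clique_number W F + card K \<le> clique_number (W \<union> K) (join_complete W F K)"
    using card_clique_le_clique_number[OF graph_join_complete clique_join_complete_Un]
      card_clique_Un by metis
qed

lemma cliques_of_size_join_complete:
  assumes "k = clique_number W F"
  shows "cliques_of_size (W \<union> K) (join_complete W F K) (k + card K)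
    = (\<lambda>C. C \<union> K) ` cliques_of_size W F k"
proof (intro equalityI subsetI)
  fix D
  assume "D \<in> cliques_of_size (W \<union> K) (join_complete W F K) (k + card K)"
  then have D: "clique (W \<union> K) (join_complete W F K) D" and card_D: "card D = k + card K"
    by (auto simp: cliques_of_size_def)
  have clique_DW: "clique W F (D \<inter> W)"
    using D by (simp add: clique_join_complete_iff)
  have "card (D \<inter> W) \<le> k" and "card (D \<inter> K) \<le> card K"
    using card_clique_le_clique_number[OF graph clique_DW] assms finite_K by (simp_all add: card_mono)
  with card_D card_clique_join_complete[OF D]
  have "card (D \<inter> W) = k" and "card (D \<inter> K) = card K"
    by simp_all
  then have "D \<inter> W \<in> cliques_of_size W F k" and "D \<inter> K = K"
    using clique_DW finite_K graph
    by (auto simp: cliques_of_size_def graph_def card_subset_eq)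
  moreover have "D = (D \<inter> W) \<union> (D \<inter> K)"
    using D by (auto simp: clique_join_complete_iff)
  ultimately show "D \<in> (\<lambda>C. C \<union> K) ` cliques_of_size W F k"
    by auto
next
  fix D
  assume "D \<in> (\<lambda>C. C \<union> K) ` cliques_of_size W F k"
  then show "D \<in> cliques_of_size (W \<union> K) (join_complete W F K) (k + card K)"
    using clique_join_complete_Un card_clique_Un finite_K
    by (auto simp: cliques_of_size_def)
qed

lemma graph_iso_TJ_join_complete:
  assumes "k = clique_number W F"
  shows "graph_iso (TJ_V W F k) (TJ_E W F k)
    (TJ_V (W \<union> K) (join_complete W F K) (k + card K))
    (TJ_E (W \<union> K) (join_complete W F K) (k + card K))"
proof -
  have diff_Un: "(C \<union> K) - (C' \<union> K) = C - C'" if "C \<in> cliques_of_size W F k" for C C'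
    using that disjoint by (auto simp: cliques_of_size_def clique_def)
  have "inj_on (\<lambda>C. C \<union> K) (cliques_of_size W F k)"
    using diff_Un by (intro inj_onI) (metis Diff_cancel Diff_eq_empty_iff subset_antisym)
  then have "bij_betw (\<lambda>C. C \<union> K) (cliques_of_size W F k)
      (cliques_of_size (W \<union> K) (join_complete W F K) (k + card K))"
    by (simp add: bij_betw_def cliques_of_size_join_complete[OF assms])
  moreover have "TJ_E W F k C C' \<longleftrightarrow>
      TJ_E (W \<union> K) (join_complete W F K) (k + card K) (C \<union> K) (C' \<union> K)"
    if "C \<in> cliques_of_size W F k" and "C' \<in> cliques_of_size W F k" for C C'
    using that diff_Un cliques_of_size_join_complete[OF assms] by (auto simp: TJ_E_def)
  ultimately show ?thesis
    unfolding graph_iso_def TJ_V_def by blast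
qed

end

theorem proposition4p12:
  fixes V :: "'a set" and E :: "'a \<Rightarrow> 'a \<Rightarrow> bool" and k n :: nat
  assumes "graph V E"
    and "max_TJ_graph k V E"
    and "k \<le> n"
  shows "max_TJ_graph n V E"
proof -
  obtain W :: "nat set" and F where G: "graph W F" and omega: "clique_number W F = k"
    and iso: "graph_iso V E (TJ_V W F k) (TJ_E W F k)"
    using assms(2) unfolding max_TJ_graph_def by blast
  have "infinite (UNIV - W)"
    using G by (simp add: graph_def)
  then obtain K where K: "finite K" "card K = n - k" "K \<subseteq> UNIV - W"
    using infinite_arbitrarily_large by blast
  then have "W \<inter> K = {}" and "k + card K = n"
    using assms(3) by auto
  with G K(1) omega iso show ?thesis
    unfolding max_TJ_graph_def
    by (metis graph_join_complete clique_number_join_complete graph_iso_TJ_join_complete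
        graph_iso_trans)
qed

end
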